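(* Let $S$ be an idempotent semiring. The following are equivalent: (1) $\mathcal{D}^{\bullet}$ is the least distributive lattice congruence on $S$; (2) $S$ satisfies $x+xyx+x\approx x$ and $\mathcal{D}^{+}\subseteq\mathcal{D}^{\bullet}$; (3) $S$ satisfies the identity $x\approx xyx+x+xyx$.
   Context: An idempotent semiring is an algebra $(S,+,\cdot)$ with two binary operations such that $(S,+)$ and $(S,\cdot)$ are bands (associative, with $x+x=x$ and $xx=x$), and both distributive laws $x(y+z)=xy+xz$ and $(x+y)z=xz+yz$ hold; addition is not assumed commutative. A distributive lattice congruence on $S$ is a congruence $\rho$ such that $S/\rho$ satisfies $x+y\approx y+x$, $xy\approx yx$ and $x+xy\approx x$. Green's relations on the reducts: $a\,\mathcal{D}^{\bullet}\,b$ iff $aba=a$ and $bab=b$; $a\,\mathcal{D}^{+}\,b$ iff $a+b+a=a$ and $b+a+b=b$. *)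

theory Defs
  imports Main
begin

text \<open>An idempotent semiring on the whole type 'a, with addition ad and
multiplication mu (addition not assumed commutative).\<close>

definition idempotent_semiring :: "('a \<Rightarrow> 'a \<Rightarrow> 'a) \<Rightarrow> ('a \<Rightarrow> 'a \<Rightarrow> 'a) \<Rightarrow> bool" where
  "idempotent_semiring ad mu \<longleftrightarrow>
     (\<forall>x y z. ad (ad x y) z = ad x (ad y z)) \<and> (\<forall>x. ad x x = x) \<and>
     (\<forall>x y z. mu (mu x y) z = mu x (mu y z)) \<and> (\<forall>x. mu x x = x) \<and>
     (\<forall>x y z. mu x (ad y z) = ad (mu x y) (mu x z)) \<and>
     (\<forall>x y z. mu (ad x y) z = ad (mu x z) (mu y z))"

definition semiring_congruence ::
  "('a \<Rightarrow> 'a \<Rightarrow> 'a) \<Rightarrow> ('a \<Rightarrow> 'a \<Rightarrow> 'a) \<Rightarrow> ('a \<Rightarrow> 'a \<Rightarrow> bool) \<Rightarrow> bool" where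
  "semiring_congruence ad mu \<rho> \<longleftrightarrow>
     equivp \<rho> \<and>
     (\<forall>a b c d. \<rho> a b \<longrightarrow> \<rho> c d \<longrightarrow> \<rho> (ad a c) (ad b d)) \<and>
     (\<forall>a b c d. \<rho> a b \<longrightarrow> \<rho> c d \<longrightarrow> \<rho> (mu a c) (mu b d))"

definition dl_congruence ::
  "('a \<Rightarrow> 'a \<Rightarrow> 'a) \<Rightarrow> ('a \<Rightarrow> 'a \<Rightarrow> 'a) \<Rightarrow> ('a \<Rightarrow> 'a \<Rightarrow> bool) \<Rightarrow> bool" where
  "dl_congruence ad mu \<rho> \<longleftrightarrow>
     semiring_congruence ad mu \<rho> \<and>
     (\<forall>x y. \<rho> (ad x y) (ad y x)) \<and>
     (\<forall>x y. \<rho> (mu x y) (mu y x)) \<and>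
     (\<forall>x y. \<rho> (ad x (mu x y)) x)"

definition least_dl_congruence ::
  "('a \<Rightarrow> 'a \<Rightarrow> 'a) \<Rightarrow> ('a \<Rightarrow> 'a \<Rightarrow> 'a) \<Rightarrow> ('a \<Rightarrow> 'a \<Rightarrow> bool) \<Rightarrow> bool" where
  "least_dl_congruence ad mu \<rho> \<longleftrightarrow>
     dl_congruence ad mu \<rho> \<and> (\<forall>\<sigma>. dl_congruence ad mu \<sigma> \<longrightarrow> (\<forall>a b. \<rho> a b \<longrightarrow> \<sigma> a b))"

text \<open>Green's D relation on the multiplicative band: a D b iff aba = a and bab = b.\<close>
definition D_mul :: "('a \<Rightarrow> 'a \<Rightarrow> 'a) \<Rightarrow> 'a \<Rightarrow> 'a \<Rightarrow> bool" where
  "D_mul mu a b \<longleftrightarrow> mu (mu a b) a = a \<and> mu (mu b a) b = b"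

definition D_add :: "('a \<Rightarrow> 'a \<Rightarrow> 'a) \<Rightarrow> 'a \<Rightarrow> 'a \<Rightarrow> bool" where
  "D_add ad a b \<longleftrightarrow> ad (ad a b) a = a \<and> ad (ad b a) b = b"

end

theory Submission
  imports Defs
begin

(* In a band, Green's relation D (aba = a, bab = b) is a congruence with xy D yx, so it lies
   below every congruence that makes the multiplication commutative: D* is the least distributive
   lattice congruence as soon as it is one at all.
   The identity x = xyx + x + xyx says that x and xyx absorb each other additively on both sides.
   It gives D+ <= D* by expanding aba = a(b + a + b)a, and it makes D* respect addition: if
   aba = a, then w = (a + c)(b + c)(a + c) expands to a sum beginning with a and ending with c,
   so w + (a + c) + w = w in the additive band, while the identity gives a + c = w + (a + c) + w.
   Conversely x + xyx + x = x makes x D+ (xyx + x + xyx), and D+ <= D* turns this into the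
   identity because x(xyx + x + xyx)x = xyx + x + xyx. *)

lemma D_add_eq_D_mul: "D_add = D_mul"
  by (simp add: fun_eq_iff D_add_def D_mul_def)

locale band = semigroup +
  assumes idem: "a \<^bold>* a = a"
begin

lemma left_idem: "a \<^bold>* (a \<^bold>* b) = a \<^bold>* b"
  by (metis assoc idem)

lemma D_mul_sym: "D_mul f a b \<Longrightarrow> D_mul f b a"
  by (simp add: D_mul_def)

lemma D_mul_trans: "D_mul f a b \<Longrightarrow> D_mul f b c \<Longrightarrow> D_mul f a c"
  unfolding D_mul_def by (metis assoc idem)

lemma equivp_D_mul: "equivp (D_mul f)"
  by (rule equivpI) (auto simp: reflp_def symp_def transp_def idem D_mul_def[of f x x for x]
      intro: D_mul_sym D_mul_trans)

lemma D_mul_mult_right: "D_mul f a b \<Longrightarrow> D_mul f (a \<^bold>* c) (b \<^bold>* c)"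
  unfolding D_mul_def by (metis assoc idem)

lemma D_mul_mult_left: "D_mul f a b \<Longrightarrow> D_mul f (c \<^bold>* a) (c \<^bold>* b)"
  unfolding D_mul_def by (metis assoc idem)

lemma D_mul_commute: "D_mul f (a \<^bold>* b) (b \<^bold>* a)"
  unfolding D_mul_def by (metis assoc idem)

lemma D_mul_sandwich: "x \<^bold>* a \<^bold>* x = x \<Longrightarrow> D_mul f x (a \<^bold>* x \<^bold>* a)"
  unfolding D_mul_def by (metis assoc idem)

lemma sandwich_outer_factors: "x = a \<^bold>* r \<^bold>* c \<Longrightarrow> x \<^bold>* (a \<^bold>* c) \<^bold>* x = x"
  by (metis assoc idem)

end

locale idem_semiring =
  add: band ad + mult: band mu
  for ad :: "'a \<Rightarrow> 'a \<Rightarrow> 'a" (infixl \<open>\<oplus>\<close> 65)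
  and mu :: "'a \<Rightarrow> 'a \<Rightarrow> 'a" (infixl \<open>\<odot>\<close> 70) +
  assumes distrib_left: "x \<odot> (y \<oplus> z) = x \<odot> y \<oplus> x \<odot> z"
    and distrib_right: "(x \<oplus> y) \<odot> z = x \<odot> z \<oplus> y \<odot> z"
begin

lemma sandwich_distrib:
  "(a \<oplus> c) \<odot> v \<odot> (a \<oplus> c) = a \<odot> v \<odot> a \<oplus> c \<odot> v \<odot> a \<oplus> a \<odot> v \<odot> c \<oplus> c \<odot> v \<odot> c"
  by (simp add: distrib_left distrib_right add.assoc)

lemma D_mul_le_dl_congruence:
  assumes "dl_congruence ad mu \<sigma>" and "D_mul mu a b"
  shows "\<sigma> a b"
proof -
  have "equivp \<sigma>" and commute: "\<And>x y. \<sigma> (x \<odot> y) (y \<odot> x)"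
    using assms(1) by (simp_all add: dl_congruence_def semiring_congruence_def)
  moreover have "\<sigma> a (a \<odot> b)" "\<sigma> b (b \<odot> a)"
    using commute[of "a \<odot> b" a] commute[of "b \<odot> a" b] assms(2)
    by (simp_all add: D_mul_def mult.left_idem)
  ultimately show ?thesis
    by (meson equivp_symp equivp_transp)
qed

context
  assumes sandwich: "\<And>x y. x = x \<odot> y \<odot> x \<oplus> x \<oplus> x \<odot> y \<odot> x"
begin

lemma add_sandwich_right: "x \<oplus> x \<odot> y \<odot> x = x"
  by (metis sandwich add.assoc add.idem)

lemma D_add_imp_D_mul:
  assumes "D_add ad a b" shows "D_mul mu a b"
proof -
  have "a \<odot> b \<odot> a = a" if "b \<oplus> a \<oplus> b = b" for a b
  proof -
    have "a \<odot> b \<odot> a = a \<odot> (b \<oplus> a \<oplus> b) \<odot> a"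
      using that by simp
    also have "\<dots> = a \<odot> b \<odot> a \<oplus> a \<oplus> a \<odot> b \<odot> a"
      by (simp add: distrib_left distrib_right mult.assoc mult.left_idem mult.idem)
    finally show ?thesis
      using sandwich by simp
  qed
  then show ?thesis
    using assms by (simp add: D_add_def D_mul_def)
qed

lemma sandwich_eq_if_outer_summands:
  assumes "u \<odot> v \<odot> u = p \<oplus> r \<oplus> q" and "u = p \<oplus> q"
  shows "u \<odot> v \<odot> u = u"
  using add.sandwich_outer_factors[OF assms(1)] assms(2) sandwich[of u v] by simp

lemma sandwich_add_right:
  assumes "a \<odot> b \<odot> a = a"
  shows "(a \<oplus> c) \<odot> (b \<oplus> c) \<odot> (a \<oplus> c) = a \<oplus> c"
proof (rule sandwich_eq_if_outer_summands)
  show "(a \<oplus> c) \<odot> (b \<oplus> c) \<odot> (a \<oplus> c) =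
      a \<oplus> (a \<odot> c \<odot> a \<oplus> c \<odot> (b \<oplus> c) \<odot> a \<oplus> a \<odot> (b \<oplus> c) \<odot> c \<oplus> c \<odot> b \<odot> c) \<oplus> c"
    unfolding sandwich_distrib
    by (simp add: distrib_left distrib_right assms add.assoc mult.idem)
qed simp

lemma sandwich_add_left:
  assumes "a \<odot> b \<odot> a = a"
  shows "(c \<oplus> a) \<odot> (c \<oplus> b) \<odot> (c \<oplus> a) = c \<oplus> a"
proof (rule sandwich_eq_if_outer_summands)
  show "(c \<oplus> a) \<odot> (c \<oplus> b) \<odot> (c \<oplus> a) =
      c \<oplus> (c \<odot> b \<odot> c \<oplus> a \<odot> (c \<oplus> b) \<odot> c \<oplus> c \<odot> (c \<oplus> b) \<odot> a \<oplus> a \<odot> c \<odot> a) \<oplus> a"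
    unfolding sandwich_distrib
    by (simp add: distrib_left distrib_right assms add.assoc mult.idem)
qed simp

lemma D_mul_add_right: "D_mul mu a b \<Longrightarrow> D_mul mu (a \<oplus> c) (b \<oplus> c)"
  by (simp add: D_mul_def sandwich_add_right)

lemma D_mul_add_left: "D_mul mu a b \<Longrightarrow> D_mul mu (c \<oplus> a) (c \<oplus> b)"
  by (simp add: D_mul_def sandwich_add_left)

lemma dl_congruence_D_mul: "dl_congruence ad mu (D_mul mu)"
  unfolding dl_congruence_def semiring_congruence_def
proof (intro conjI allI impI)
  show "equivp (D_mul mu)"
    by (rule mult.equivp_D_mul)
  fix a b c d
  assume "D_mul mu a b" "D_mul mu c d"
  then show "D_mul mu (a \<oplus> c) (b \<oplus> d)" "D_mul mu (a \<odot> c) (b \<odot> d)"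
    by (metis D_mul_add_left D_mul_add_right mult.D_mul_trans,
        metis mult.D_mul_mult_left mult.D_mul_mult_right mult.D_mul_trans)
next
  fix x y
  show "D_mul mu (x \<oplus> y) (y \<oplus> x)"
    using add.D_mul_commute[of x y] by (intro D_add_imp_D_mul) (simp add: D_add_eq_D_mul)
  show "D_mul mu (x \<odot> y) (y \<odot> x)"
    by (rule mult.D_mul_commute)
  have "x \<oplus> x \<odot> y \<odot> x = x"
    by (rule add_sandwich_right)
  then show "D_mul mu (x \<oplus> x \<odot> y) x"
    by (simp add: D_mul_def distrib_left distrib_right mult.assoc mult.left_idem mult.idem)
qed

end

lemma sandwich_if_D_add_le_D_mul:
  assumes absorb: "\<And>x y. x \<oplus> x \<odot> y \<odot> x \<oplus> x = x"
    and D_add_le: "\<And>a b. D_add ad a b \<Longrightarrow> D_mul mu a b"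
  shows "x = x \<odot> y \<odot> x \<oplus> x \<oplus> x \<odot> y \<odot> x"
proof -
  let ?a = "x \<odot> y \<odot> x"
  have "D_add ad x (?a \<oplus> x \<oplus> ?a)"
    using add.D_mul_sandwich[OF absorb] by (simp add: D_add_eq_D_mul)
  then have "x \<odot> (?a \<oplus> x \<oplus> ?a) \<odot> x = x"
    using D_add_le by (simp add: D_mul_def)
  moreover have "x \<odot> (?a \<oplus> x \<oplus> ?a) \<odot> x = ?a \<oplus> x \<oplus> ?a"
    by (simp add: distrib_left distrib_right mult.assoc mult.left_idem mult.idem)
  ultimately show ?thesis
    by simp
qed

lemma absorb_if_dl_congruence_D_mul:
  assumes "dl_congruence ad mu (D_mul mu)"
  shows "x \<oplus> x \<odot> y \<odot> x \<oplus> x = x"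
proof -
  have "D_mul mu (x \<oplus> x \<odot> (y \<odot> x) \<oplus> x) (x \<oplus> x)"
    using assms mult.equivp_D_mul
    by (simp add: dl_congruence_def semiring_congruence_def equivp_reflp)
  then have "x \<odot> (x \<oplus> x \<odot> y \<odot> x \<oplus> x) \<odot> x = x"
    by (simp add: D_mul_def add.idem mult.assoc)
  moreover have "x \<odot> (x \<oplus> x \<odot> y \<odot> x \<oplus> x) \<odot> x = x \<oplus> x \<odot> y \<odot> x \<oplus> x"
    by (simp add: distrib_left distrib_right mult.assoc mult.left_idem mult.idem)
  ultimately show ?thesis
    by simp
qed

lemma D_add_le_D_mul_if_dl_congruence_D_mul:
  assumes "dl_congruence ad mu (D_mul mu)" and "D_add ad a b"
  shows "D_mul mu a b"
proof -
  have commute: "\<And>x y. D_mul mu (x \<oplus> y) (y \<oplus> x)"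
    using assms(1) by (simp add: dl_congruence_def)
  have "D_mul mu a (a \<oplus> b)" "D_mul mu b (b \<oplus> a)"
    using commute[of "a \<oplus> b" a] commute[of "b \<oplus> a" b] assms(2)
    by (simp_all add: D_add_def add.left_idem)
  then show ?thesis
    using commute[of a b] by (meson mult.D_mul_sym mult.D_mul_trans)
qed

end

theorem theorem3p1:
  fixes ad mu :: "'a \<Rightarrow> 'a \<Rightarrow> 'a"
  assumes "idempotent_semiring ad mu"
  shows "(least_dl_congruence ad mu (D_mul mu)
            \<longleftrightarrow> ((\<forall>x y. ad (ad x (mu (mu x y) x)) x = x) \<and>
                 (\<forall>a b. D_add ad a b \<longrightarrow> D_mul mu a b)))
       \<and> (((\<forall>x y. ad (ad x (mu (mu x y) x)) x = x) \<and>
                 (\<forall>a b. D_add ad a b \<longrightarrow> D_mul mu a b))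
            \<longleftrightarrow> (\<forall>x y. x = ad (ad (mu (mu x y) x) x) (mu (mu x y) x)))"
    (is "(?least \<longleftrightarrow> ?absorb \<and> ?D_add_le) \<and> (_ \<longleftrightarrow> ?sandwich)")
proof -
  interpret idem_semiring ad mu
    using assms by unfold_locales (simp_all add: idempotent_semiring_def)
  have sandwich_iff: "?absorb \<and> ?D_add_le \<longleftrightarrow> ?sandwich"
    using sandwich_if_D_add_le_D_mul add_sandwich_right D_add_imp_D_mul
    by (metis add.idem)
  moreover have "?least \<longleftrightarrow> ?absorb \<and> ?D_add_le"
    unfolding least_dl_congruence_def
    using absorb_if_dl_congruence_D_mul D_add_le_D_mul_if_dl_congruence_D_mul
      dl_congruence_D_mul D_mul_le_dl_congruence sandwich_iff
    by blast
  ultimately show ?thesis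
    by blast
qed

end
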